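(* Let $\nu>2$ and let $F_\nu$ be the CDF of the Student's $t$-distribution with $\nu$ degrees of freedom, location $0$ and scale $1$. For every real $m\in(0,\nu)$ and every $t>0$, $$\frac{1}{(1-F_\nu(t))(t^2+\nu)^{\frac{\nu-1}{2}}}\le\frac{\sqrt{t^2+\nu-m}}{\kappa_m},\qquad \kappa_m=\frac{\Gamma\left(\frac{\nu+1}{2}\right)(\nu-m)\,m^{\nu/2-1}}{2\sqrt{\pi}\,\Gamma\left(\frac{\nu}{2}\right)}.$$ *)

theory Defs
  imports "HOL-Probability.Probability"
begin

definition student_t_density :: "real \<Rightarrow> real \<Rightarrow> real" where
  "student_t_density \<nu> x =
     Gamma ((\<nu> + 1) / 2) / (sqrt (\<nu> * pi) * Gamma (\<nu> / 2))
     * (1 + x\<^sup>2 / \<nu>) powr (- (\<nu> + 1) / 2)"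

definition student_t_CDF :: "real \<Rightarrow> real \<Rightarrow> real" where
  "student_t_CDF \<nu> t = (LBINT x:{..t}. student_t_density \<nu> x)"

end

theory Submission
  imports Defs "HOL-Real_Asymp.Real_Asymp"
begin

text \<open>
  The substitution \<open>x = \<surd>\<nu> (w - 1/2) / \<surd>(w (1 - w))\<close> turns the integral of the density over
  the real line into a Beta integral, and Legendre's duplication formula shows that its value
  is 1; hence \<open>1 - F(t)\<close> is the integral of the density \<open>f\<close> over \<open>(t, \<infinity>)\<close>. The function
  \<open>g(x) = \<kappa>\<^sub>m / ((x\<^sup>2 + \<nu>)^((\<nu> - 1)/2) \<surd>(x\<^sup>2 + \<nu> - m))\<close> tends to 0 at infinity and
  satisfies \<open>-g' \<le> f\<close> on \<open>[0, \<infinity>)\<close>, so \<open>g(t) = \<integral>\<^sub>t\<^sup>\<infinity> -g' \<le> 1 - F(t)\<close>, which is the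
  claim rearranged. With \<open>s = x\<^sup>2 + \<nu> - m\<close>, the inequality \<open>-g' \<le> f\<close> reduces to
  \<open>x (s + (\<nu> - m)/2) \<le> s\<surd>s\<close> together with the weighted AM-GM bound
  \<open>(k + 1) p^k (1 - p) \<le> 1\<close> for \<open>0 < p < 1\<close>.
\<close>

lemma Gamma_legendre_duplication_real:
  fixes z :: real
  assumes "0 < z"
  shows "Gamma z * Gamma (z + 1/2) = 2 powr (1 - 2 * z) * sqrt pi * Gamma (2 * z)"
proof -
  have z: "complex_of_real z \<notin> \<int>\<^sub>\<le>\<^sub>0"
    using assms by (metis of_real_in_nonpos_Ints_iff nonpos_Ints_nonpos not_le)
  have shift: "complex_of_real z + 1/2 = complex_of_real (z + 1/2)"
    by simp
  have "z + 1/2 \<notin> \<int>\<^sub>\<le>\<^sub>0"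
    using assms nonpos_Ints_nonpos[of "z + 1/2"] by linarith
  then have z_half: "complex_of_real z + 1/2 \<notin> \<int>\<^sub>\<le>\<^sub>0"
    unfolding shift of_real_in_nonpos_Ints_iff .
  have pow2: "exp ((1 - 2 * complex_of_real z) * complex_of_real (ln 2))
      = of_real (2 powr (1 - 2 * z))"
    by (simp add: powr_def exp_of_real[symmetric] mult.commute)
  have double: "Gamma (2 * complex_of_real z) = of_real (Gamma (2 * z))"
    using Gamma_complex_of_real[of "2 * z"] by simp
  have "complex_of_real (Gamma z * Gamma (z + 1/2))
      = complex_of_real (2 powr (1 - 2 * z) * sqrt pi * Gamma (2 * z))"
    using Gamma_legendre_duplication[OF z z_half]
    unfolding shift Gamma_complex_of_real double pow2 by simp
  then show ?thesis
    by (simp only: of_real_eq_iff)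
qed

lemma interval_integral_powr_one_minus_powr:
  fixes p q :: real
  assumes "0 < p" "0 < q"
  shows "set_integrable lborel (einterval 0 1) (\<lambda>w. w powr p * (1 - w) powr q)"
    and "(LBINT w=0..1. w powr p * (1 - w) powr q) = Beta (p + 1) (q + 1)"
proof -
  have "continuous_on {0..1} (\<lambda>w::real. w powr p * (1 - w) powr q)"
    using assms by (intro continuous_intros continuous_on_powr') auto
  then have int: "set_integrable lborel {0..1} (\<lambda>w::real. w powr p * (1 - w) powr q)"
    by (rule borel_integrable_atLeastAtMost')
  then show "set_integrable lborel (einterval 0 1) (\<lambda>w. w powr p * (1 - w) powr q)"
    by (rule set_integrable_subset) (auto simp: zero_ereal_def one_ereal_def)
  have "(LBINT w=ereal 0..ereal 1. w powr p * (1 - w) powr q)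
      = integral {0..1} (\<lambda>w::real. w powr p * (1 - w) powr q)"
    by (rule interval_integral_eq_integral[OF _ int]) simp
  also have "\<dots> = Beta (p + 1) (q + 1)"
    using has_integral_Beta_real[of "p + 1" "q + 1"] assms by (auto intro: integral_unique)
  finally show "(LBINT w=0..1. w powr p * (1 - w) powr q) = Beta (p + 1) (q + 1)"
    by (simp add: zero_ereal_def one_ereal_def)
qed

definition student_t_const :: "real \<Rightarrow> real" where
  "student_t_const \<nu> = Gamma ((\<nu> + 1) / 2) / (sqrt (\<nu> * pi) * Gamma (\<nu> / 2))"

definition student_t_kernel :: "real \<Rightarrow> real \<Rightarrow> real" where
  "student_t_kernel \<nu> x = (1 + x\<^sup>2 / \<nu>) powr (- (\<nu> + 1) / 2)"

lemma student_t_density_eq: "student_t_density \<nu> x = student_t_const \<nu> * student_t_kernel \<nu> x"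
  by (simp add: student_t_density_def student_t_const_def student_t_kernel_def)

lemma student_t_const_Beta:
  assumes "0 < \<nu>"
  shows "student_t_const \<nu> = 1 / (sqrt \<nu> * 2 powr (\<nu> - 1) * Beta (\<nu> / 2) (\<nu> / 2))"
proof -
  have Gamma_pos: "Gamma (\<nu> / 2) > 0" "Gamma ((\<nu> + 1) / 2) > 0" "Gamma \<nu> > 0"
    using assms by (auto intro!: Gamma_real_pos)
  have "Gamma (\<nu> / 2) * Gamma ((\<nu> + 1) / 2) = 2 powr (1 - \<nu>) * sqrt pi * Gamma \<nu>"
    using Gamma_legendre_duplication_real[of "\<nu> / 2"] assms by (simp add: add_divide_distrib)
  then have "Beta (\<nu> / 2) (\<nu> / 2) = Gamma (\<nu> / 2) * 2 powr (1 - \<nu>) * sqrt pi / Gamma ((\<nu> + 1) / 2)"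
    using Gamma_pos by (simp add: Beta_def field_simps)
  moreover have "2 powr (\<nu> - 1) * 2 powr (1 - \<nu>) = (1::real)"
    by (simp flip: powr_add)
  ultimately show ?thesis
    using Gamma_pos assms
    by (simp add: student_t_const_def real_sqrt_mult field_simps)
qed

text \<open>The substitution comes from probability: if \<open>W\<close> has distribution \<open>Beta(\<nu>/2, \<nu>/2)\<close>, then
  \<open>beta_to_t \<nu> W\<close> has Student's t-distribution with \<open>\<nu>\<close> degrees of freedom.\<close>
definition beta_to_t :: "real \<Rightarrow> real \<Rightarrow> real" where
  "beta_to_t \<nu> w = sqrt \<nu> * (w - 1/2) / sqrt (w * (1 - w))"

definition beta_to_t' :: "real \<Rightarrow> real \<Rightarrow> real" where
  "beta_to_t' \<nu> w = sqrt \<nu> / (4 * (w * (1 - w)) * sqrt (w * (1 - w)))"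

lemma beta_to_t_has_real_derivative:
  assumes "0 < w" "w < 1"
  shows "(beta_to_t \<nu> has_real_derivative beta_to_t' \<nu> w) (at w)"
proof -
  define S where "S = sqrt (w * (1 - w))"
  have S: "0 < S" "S * S = w * (1 - w)"
    using assms by (auto simp: S_def)
  let ?D = "(sqrt \<nu> * S - (sqrt \<nu> * (w - 1/2)) * ((1 - 2 * w) / (2 * S))) / (S * S)"
  have "(beta_to_t \<nu> has_real_derivative ?D) (at w)"
    unfolding beta_to_t_def[abs_def] using assms S
    by (auto intro!: derivative_eq_intros simp: S_def field_simps)
  moreover have "?D = beta_to_t' \<nu> w"
  proof -
    have key: "2 * (S * S) - (1 - 2 * w) * (w - 1/2) = 1/2"
      using S(2) by (simp add: algebra_simps)
    have "?D = sqrt \<nu> * (2 * (S * S) - (1 - 2 * w) * (w - 1/2)) / (2 * (S * S * S))"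
      using S(1) by (simp add: field_simps)
    also have "\<dots> = sqrt \<nu> / (4 * (S * S) * S)"
      unfolding key by (simp add: field_simps)
    finally show ?thesis
      unfolding beta_to_t'_def S_def[symmetric] S(2) .
  qed
  ultimately show ?thesis
    by simp
qed

lemma student_t_kernel_beta_to_t:
  assumes "0 < w" "w < 1" "0 < \<nu>"
  shows "student_t_kernel \<nu> (beta_to_t \<nu> w) * beta_to_t' \<nu> w
      = sqrt \<nu> * 2 powr (\<nu> - 1) * (w powr (\<nu> / 2 - 1) * (1 - w) powr (\<nu> / 2 - 1))"
proof -
  define P where "P = w * (1 - w)"
  have P: "0 < P"
    using assms by (simp add: P_def)
  have "1 + (beta_to_t \<nu> w)\<^sup>2 / \<nu> = 1 + (w - 1/2)\<^sup>2 / P"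
    unfolding beta_to_t_def P_def[symmetric] using assms P
    by (simp add: power_divide real_sqrt_pow2 power_mult_distrib)
  also have "\<dots> = 1 + (1/4 - P) / P"
    by (simp add: P_def power2_eq_square algebra_simps)
  also have "\<dots> = 1 / (4 * P)"
    using P by (simp add: field_simps)
  finally have base: "1 + (beta_to_t \<nu> w)\<^sup>2 / \<nu> = 1 / (4 * P)" .
  have "student_t_kernel \<nu> (beta_to_t \<nu> w) = (4 * P) powr ((\<nu> + 1) / 2)"
    unfolding student_t_kernel_def base using P
    by (simp add: powr_divide powr_minus_divide divide_simps flip: powr_add)
  also have "\<dots> = 4 powr ((\<nu> + 1) / 2) * (P powr (\<nu> / 2 - 1) * P powr (3 / 2))"
    using P by (simp add: powr_mult add_divide_distrib add.commute flip: powr_add)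
  also have "P powr (3 / 2) = P * sqrt P"
    using P by (simp add: powr_add[of P 1 "1/2", simplified] powr_half_sqrt)
  also have "(4::real) powr ((\<nu> + 1) / 2) = 4 * 2 powr (\<nu> - 1)"
  proof -
    have "(4::real) powr ((\<nu> + 1) / 2) = (2 powr 2) powr ((\<nu> + 1) / 2)"
      by simp
    also have "\<dots> = 2 powr (2 + (\<nu> - 1))"
      by (simp add: powr_powr add.commute)
    also have "\<dots> = 2 powr 2 * 2 powr (\<nu> - 1)"
      by (rule powr_add)
    finally show ?thesis
      by simp
  qed
  finally have "student_t_kernel \<nu> (beta_to_t \<nu> w)
      = 4 * 2 powr (\<nu> - 1) * (P powr (\<nu> / 2 - 1) * (P * sqrt P))" .
  moreover have "beta_to_t' \<nu> w = sqrt \<nu> / (4 * P * sqrt P)"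
    unfolding beta_to_t'_def P_def ..
  moreover have "P powr (\<nu> / 2 - 1) = w powr (\<nu> / 2 - 1) * (1 - w) powr (\<nu> / 2 - 1)"
    unfolding P_def using assms by (simp add: powr_mult)
  ultimately show ?thesis
    using P by (simp add: field_simps)
qed

lemma filterlim_beta_to_t_at_right_0:
  assumes "0 < \<nu>"
  shows "filterlim (beta_to_t \<nu>) at_bot (at_right 0)"
  unfolding beta_to_t_def using assms by real_asymp

lemma filterlim_beta_to_t_at_left_1:
  assumes "0 < \<nu>"
  shows "filterlim (beta_to_t \<nu>) at_top (at_left 1)"
  unfolding beta_to_t_def using assms by real_asymp

lemma isCont_student_t_kernel:
  assumes "0 < \<nu>"
  shows "isCont (student_t_kernel \<nu>) y"
proof -
  have "0 < 1 + y\<^sup>2 / \<nu>"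
    using assms by (intro add_pos_nonneg) auto
  then show ?thesis
    unfolding student_t_kernel_def[abs_def] using assms by (auto intro!: continuous_intros)
qed

lemma isCont_beta_to_t':
  assumes "0 < w" "w < 1"
  shows "isCont (beta_to_t' \<nu>) w"
  using assms unfolding beta_to_t'_def[abs_def] by (auto intro!: continuous_intros)

lemma beta_to_t'_nonneg:
  assumes "0 \<le> \<nu>" "0 \<le> w" "w \<le> 1"
  shows "0 \<le> beta_to_t' \<nu> w"
  using assms unfolding beta_to_t'_def by (auto intro!: divide_nonneg_nonneg mult_nonneg_nonneg)

lemma student_t_kernel_integral:
  assumes "2 < \<nu>"
  shows "set_integrable lborel UNIV (student_t_kernel \<nu>)"
    and "(LBINT x:UNIV. student_t_kernel \<nu> x) = sqrt \<nu> * 2 powr (\<nu> - 1) * Beta (\<nu> / 2) (\<nu> / 2)"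
proof -
  let ?c = "sqrt \<nu> * 2 powr (\<nu> - 1)"
  have \<nu>: "0 < \<nu>" and q: "0 < \<nu> / 2 - 1"
    using assms by simp_all
  have in_unit: "0 < w" "w < 1" if "0 < ereal w" "ereal w < 1" for w
    using that by (auto simp: zero_ereal_def one_ereal_def)
  have pullback: "student_t_kernel \<nu> (beta_to_t \<nu> w) * beta_to_t' \<nu> w
      = ?c * (w powr (\<nu> / 2 - 1) * (1 - w) powr (\<nu> / 2 - 1))"
    if "w \<in> einterval 0 1" for w
    using that assms in_unit by (intro student_t_kernel_beta_to_t) (auto simp: einterval_iff)
  have integrable: "set_integrable lborel (einterval 0 1)
      (\<lambda>w. student_t_kernel \<nu> (beta_to_t \<nu> w) * beta_to_t' \<nu> w)"
    by (subst set_integrable_cong[OF refl refl pullback])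
      (auto intro: interval_integral_powr_one_minus_powr(1)[OF q q])
  have lim0: "((ereal \<circ> beta_to_t \<nu> \<circ> real_of_ereal) \<longlongrightarrow> -\<infinity>) (at_right 0)"
    using filterlim_beta_to_t_at_right_0[of \<nu>] assms
    by (simp add: zero_ereal_def ereal_tendsto_simps)
  have lim1: "((ereal \<circ> beta_to_t \<nu> \<circ> real_of_ereal) \<longlongrightarrow> \<infinity>) (at_left 1)"
    using filterlim_beta_to_t_at_left_1[of \<nu>] assms
    by (simp add: one_ereal_def ereal_tendsto_simps)
  have unit_closed: "0 \<le> w" "w \<le> 1" if "0 \<le> ereal w" "ereal w \<le> 1" for w
    using that by (auto simp: zero_ereal_def one_ereal_def)
  have kernel_nonneg: "0 \<le> student_t_kernel \<nu> y" for y
    by (simp add: student_t_kernel_def)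
  note subst = interval_integral_substitution_nonneg[of 0 1 "beta_to_t \<nu>" "beta_to_t' \<nu>"
      "student_t_kernel \<nu>" "-\<infinity>" "\<infinity>", OF _ beta_to_t_has_real_derivative[OF in_unit]
      isCont_student_t_kernel[OF \<nu>] isCont_beta_to_t'[OF in_unit] kernel_nonneg
      beta_to_t'_nonneg[OF less_imp_le[OF \<nu>] unit_closed] lim0 lim1 integrable]
  show "set_integrable lborel UNIV (student_t_kernel \<nu>)"
    using subst(1) by simp
  have "(LBINT x:UNIV. student_t_kernel \<nu> x) = (LBINT x=-\<infinity>..\<infinity>. student_t_kernel \<nu> x)"
    by (simp add: interval_lebesgue_integral_def)
  also have "\<dots> = (LBINT w=0..1. student_t_kernel \<nu> (beta_to_t \<nu> w) * beta_to_t' \<nu> w)"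
    by (rule subst(2)) simp
  also have "\<dots> = (LBINT w=0..1. ?c * (w powr (\<nu> / 2 - 1) * (1 - w) powr (\<nu> / 2 - 1)))"
    by (rule interval_integral_cong) (simp add: pullback)
  also have "\<dots> = ?c * Beta (\<nu> / 2) (\<nu> / 2)"
    using interval_integral_powr_one_minus_powr(2)[OF q q] by simp
  finally show "(LBINT x:UNIV. student_t_kernel \<nu> x) = ?c * Beta (\<nu> / 2) (\<nu> / 2)" .
qed

lemma student_t_density_integral_UNIV:
  assumes "2 < \<nu>"
  shows "set_integrable lborel UNIV (student_t_density \<nu>)"
    and "(LBINT x:UNIV. student_t_density \<nu> x) = 1"
proof -
  have density: "student_t_density \<nu> = (\<lambda>x. student_t_const \<nu> * student_t_kernel \<nu> x)"
    by (simp add: student_t_density_eq[abs_def])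
  show "set_integrable lborel UNIV (student_t_density \<nu>)"
    unfolding density using student_t_kernel_integral(1)[OF assms] by simp
  have "0 < Beta (\<nu> / 2) (\<nu> / 2)"
    using assms by (simp add: Beta_def Gamma_real_pos)
  then show "(LBINT x:UNIV. student_t_density \<nu> x) = 1"
    unfolding density using student_t_kernel_integral(2)[OF assms] student_t_const_Beta assms
    by simp
qed

lemma one_minus_student_t_CDF:
  assumes "2 < \<nu>"
  shows "1 - student_t_CDF \<nu> t = (LBINT x:{t<..}. student_t_density \<nu> x)"
proof -
  note integrable = set_integrable_subset[OF student_t_density_integral_UNIV(1)[OF assms]]
  have "1 = (LBINT x:{..t} \<union> {t<..}. student_t_density \<nu> x)"
  proof -
    have "{..t} \<union> {t<..} = UNIV"
      by auto
    then show ?thesis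
      using student_t_density_integral_UNIV(2)[OF assms] by simp
  qed
  also have "\<dots> = student_t_CDF \<nu> t + (LBINT x:{t<..}. student_t_density \<nu> x)"
    unfolding student_t_CDF_def by (rule set_integral_Un) (auto intro: integrable)
  finally show ?thesis
    by simp
qed

lemma antiderivative_le_set_integral_greaterThan:
  fixes f g g' :: "real \<Rightarrow> real"
  assumes deriv: "\<And>x. t < x \<Longrightarrow> (g has_real_derivative - g' x) (at x)"
    and cont: "\<And>x. t < x \<Longrightarrow> isCont g' x"
    and nonneg: "\<And>x. t < x \<Longrightarrow> 0 \<le> g' x"
    and le: "\<And>x. t < x \<Longrightarrow> g' x \<le> f x"
    and "isCont g t"
    and "(g \<longlongrightarrow> 0) at_top"
    and f: "set_integrable lborel {t<..} f"
  shows "g t \<le> (LBINT x:{t<..}. f x)"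
proof -
  have "(((\<lambda>x. - g x) \<circ> real_of_ereal) \<longlongrightarrow> - g t) (at_right (ereal t))"
  proof -
    have "(g \<longlongrightarrow> g t) (at_right t)"
      using \<open>isCont g t\<close> by (simp add: isCont_def filterlim_at_split)
    then show ?thesis
      unfolding ereal_tendsto_simps by (rule tendsto_minus)
  qed
  moreover have "(((\<lambda>x. - g x) \<circ> real_of_ereal) \<longlongrightarrow> 0) (at_left \<infinity>)"
    unfolding ereal_tendsto_simps using tendsto_minus[OF \<open>(g \<longlongrightarrow> 0) at_top\<close>] by simp
  moreover have "((\<lambda>x. - g x) has_real_derivative g' x) (at x)" if "t < x" for x
    using DERIV_minus[OF deriv[OF that]] by simp
  ultimately have FTC:
    "set_integrable lborel (einterval t \<infinity>) g'"
    "(LBINT x=ereal t..\<infinity>. g' x) = 0 - - g t"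
    using interval_integral_FTC_nonneg[of "ereal t" \<infinity> "\<lambda>x. - g x" g' "- g t" 0]
      cont nonneg by (simp_all add: AE_I2)
  have "g t = (LBINT x:{t<..}. g' x)"
    using FTC(2) by (simp add: interval_integral_to_infinity_eq)
  also have "\<dots> \<le> (LBINT x:{t<..}. f x)"
    using FTC(1) f le by (intro set_integral_mono) auto
  finally show ?thesis .
qed

definition tail_profile :: "real \<Rightarrow> real \<Rightarrow> real \<Rightarrow> real" where
  "tail_profile \<nu> m x = 1 / ((x\<^sup>2 + \<nu>) powr ((\<nu> - 1) / 2) * sqrt (x\<^sup>2 + \<nu> - m))"

definition tail_profile_slope :: "real \<Rightarrow> real \<Rightarrow> real \<Rightarrow> real" where
  "tail_profile_slope \<nu> m x = x * (\<nu> * (x\<^sup>2 + \<nu>) - (\<nu> - 1) * m)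
     / ((x\<^sup>2 + \<nu>) powr ((\<nu> + 1) / 2) * ((x\<^sup>2 + \<nu> - m) * sqrt (x\<^sup>2 + \<nu> - m)))"

lemma tail_profile_has_real_derivative:
  fixes \<nu> m :: real
  assumes "0 < \<nu>" "m < \<nu>"
  shows "(tail_profile \<nu> m has_real_derivative - tail_profile_slope \<nu> m x) (at x)"
proof -
  define u where "u = x\<^sup>2 + \<nu>"
  define s where "s = x\<^sup>2 + \<nu> - m"
  define P where "P = u powr ((\<nu> - 1) / 2)"
  have "0 \<le> x\<^sup>2"
    by simp
  then have u: "0 < u" and s: "0 < s"
    using assms unfolding u_def s_def by linarith+
  have "(\<nu> + 1) / 2 = (\<nu> - 1) / 2 + 1"
    by (simp add: field_simps)
  then have P: "0 < P" "u powr ((\<nu> - 1) / 2 - 1) = P / u" "u powr ((\<nu> + 1) / 2) = P * u"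
    using u by (simp_all only: P_def powr_diff powr_add) simp_all
  let ?D = "(- ((\<nu> - 1) / 2 * (2 * x) * u powr ((\<nu> - 1) / 2 - 1) * sqrt s
        + u powr ((\<nu> - 1) / 2) * (inverse (sqrt s) / 2 * (2 * x))))
     / (u powr ((\<nu> - 1) / 2) * sqrt s)\<^sup>2"
  have "(tail_profile \<nu> m has_real_derivative ?D) (at x)"
    using u s unfolding tail_profile_def[abs_def] u_def s_def
    by (auto intro!: derivative_eq_intros simp: power2_eq_square)
  moreover have "?D = - (x * (\<nu> * u - (\<nu> - 1) * m) / (u powr ((\<nu> + 1) / 2) * (s * sqrt s)))"
    unfolding P(2,3) P_def[symmetric] using P(1) u s
    by (simp add: field_simps power2_eq_square) (simp add: u_def s_def algebra_simps)
  ultimately show ?thesis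
    unfolding tail_profile_slope_def u_def s_def by simp
qed

lemma isCont_tail_profile_slope:
  fixes \<nu> m :: real
  assumes "0 < \<nu>" "m < \<nu>"
  shows "isCont (tail_profile_slope \<nu> m) x"
proof -
  have "0 < x\<^sup>2 + \<nu>" "0 < x\<^sup>2 + \<nu> - m"
    using assms zero_le_power2[of x] by linarith+
  then show ?thesis
    unfolding tail_profile_slope_def[abs_def] by (intro continuous_intros) auto
qed

lemma tail_profile_slope_nonneg:
  fixes \<nu> m x :: real
  assumes "1 \<le> \<nu>" "0 \<le> m" "m < \<nu>" "0 \<le> x"
  shows "0 \<le> tail_profile_slope \<nu> m x"
proof -
  have s: "0 < x\<^sup>2 + \<nu> - m"
    using assms zero_le_power2[of x] by linarith
  have "\<nu> * (x\<^sup>2 + \<nu>) - (\<nu> - 1) * m = \<nu> * (x\<^sup>2 + \<nu> - m) + m"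
    by (simp add: algebra_simps)
  also have "0 \<le> \<nu> * (x\<^sup>2 + \<nu> - m) + m"
    using assms s by simp
  finally show ?thesis
    unfolding tail_profile_slope_def using assms s by simp
qed

lemma tail_profile_tendsto_0:
  fixes \<nu> m :: real
  assumes "0 < \<nu>" "m < \<nu>"
  shows "(tail_profile \<nu> m \<longlongrightarrow> 0) at_top"
  unfolding tail_profile_def[abs_def] using assms by real_asymp

lemma tail_profile_pos:
  fixes \<nu> m :: real
  assumes "0 < \<nu>" "m < \<nu>"
  shows "0 < tail_profile \<nu> m x"
proof -
  have "0 \<le> x\<^sup>2"
    by simp
  then have "0 < x\<^sup>2 + \<nu>" "0 < x\<^sup>2 + \<nu> - m"
    using assms by linarith+
  then show ?thesis
    unfolding tail_profile_def by simp
qed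

definition student_t_kappa :: "real \<Rightarrow> real \<Rightarrow> real" where
  "student_t_kappa \<nu> m =
     Gamma ((\<nu> + 1) / 2) * (\<nu> - m) * m powr (\<nu> / 2 - 1) / (2 * sqrt pi * Gamma (\<nu> / 2))"

lemma student_t_kappa_pos:
  assumes "0 < m" "m < \<nu>"
  shows "0 < student_t_kappa \<nu> m"
  using assms by (simp add: student_t_kappa_def Gamma_real_pos)

lemma student_t_kappa_eq:
  assumes "0 < \<nu>"
  shows "student_t_kappa \<nu> m = student_t_const \<nu> * ((\<nu> - m) * m powr (\<nu> / 2 - 1) * sqrt \<nu> / 2)"
proof -
  define r where "r = sqrt \<nu>"
  have "0 < r" "0 < sqrt pi" "0 < Gamma (\<nu> / 2)"
    using assms by (simp_all add: r_def Gamma_real_pos)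
  then show ?thesis
    unfolding student_t_kappa_def student_t_const_def real_sqrt_mult r_def[symmetric]
    by (simp add: field_simps)
qed

lemma powr_mult_one_minus_le:
  fixes k p :: real
  assumes "0 < k" "0 < p" "p < 1"
  shows "(k + 1) * (p powr k * (1 - p)) \<le> 1"
proof -
  define b where "b = (k + 1) * (1 - p)"
  have b: "0 < b"
    using assms by (simp add: b_def)
  have "p powr (k / (k + 1)) * b powr (1 / (k + 1)) \<le> k / (k + 1) * p + 1 / (k + 1) * b"
    using assms b by (intro Youngs_inequality_0) (auto simp: field_simps)
  also have "\<dots> = k / (k + 1) * p + (1 - p)"
    using assms by (simp add: b_def)
  also have "\<dots> \<le> 1"
    using assms mult_left_le_one_le[of p "k / (k + 1)"] by simp
  finally have "(p powr (k / (k + 1)) * b powr (1 / (k + 1))) powr (k + 1) \<le> 1 powr (k + 1)"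
    using assms by (intro powr_mono2) auto
  moreover have "(p powr (k / (k + 1)) * b powr (1 / (k + 1))) powr (k + 1) = p powr k * b"
    using assms b by (simp add: powr_mult powr_powr)
  ultimately show ?thesis
    by (simp add: b_def mult_ac)
qed

lemma mult_add_half_le_mult_sqrt:
  fixes a s x :: real
  assumes "0 \<le> a" "x\<^sup>2 = s - a"
  shows "x * (s + a / 2) \<le> s * sqrt s"
proof (rule power2_le_imp_le)
  have s: "a \<le> s"
    using assms by (metis diff_ge_0_iff_ge zero_le_power2)
  have "(x * (s + a / 2))\<^sup>2 = (s - a) * (s + a / 2)\<^sup>2"
    by (simp add: power_mult_distrib assms(2))
  also have "\<dots> = s ^ 3 - (3 * a\<^sup>2 * s / 4 + a ^ 3 / 4)"
    by (simp add: field_simps power2_eq_square power3_eq_cube)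
  also have "\<dots> \<le> s ^ 3"
  proof -
    have "0 \<le> 3 * a\<^sup>2 * s / 4" "0 \<le> a ^ 3 / 4"
      using assms s by simp_all
    then show ?thesis
      by linarith
  qed
  also have "\<dots> = (s * sqrt s)\<^sup>2"
    using assms s by (simp add: power_mult_distrib power3_eq_cube power2_eq_square)
  finally show "(x * (s + a / 2))\<^sup>2 \<le> (s * sqrt s)\<^sup>2" .
  show "0 \<le> s * sqrt s"
    using assms s by simp
qed

text \<open>This is \<open>tail_profile_slope_le_density\<close> with the common positive factor
  \<open>student_t_const \<nu> * \<surd>\<nu> / (2 * (x\<^sup>2 + \<nu>) powr ((\<nu> + 1) / 2))\<close> cancelled.\<close>
lemma tail_slope_ineq:
  fixes \<nu> m x :: real
  assumes "2 < \<nu>" "0 < m" "m < \<nu>" "0 \<le> x"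
  defines "s \<equiv> x\<^sup>2 + \<nu> - m"
  shows "(\<nu> - m) * m powr (\<nu> / 2 - 1) * x * (\<nu> * s + m) \<le> 2 * \<nu> powr (\<nu> / 2) * (s * sqrt s)"
proof -
  define a where "a = \<nu> - m"
  define M where "M = max (\<nu> * a) (2 * m)"
  have a: "0 < a" "a \<le> s"
    using assms zero_le_power2[of x] by (simp_all add: a_def s_def)
  have shift: "x * (s + a / 2) \<le> s * sqrt s"
    using a by (intro mult_add_half_le_mult_sqrt) (simp_all add: s_def a_def)
  have linear: "a * (\<nu> * s + m) \<le> M * (s + a / 2)"
  proof -
    have "\<nu> * a * s \<le> M * s" "m * a \<le> (M / 2) * a"
      using a by (intro mult_right_mono; simp add: M_def)+
    then show ?thesis
      by (simp add: algebra_simps)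
  qed
  have weight: "m powr (\<nu> / 2 - 1) * M \<le> 2 * \<nu> powr (\<nu> / 2)"
  proof (cases "\<nu> * a \<le> 2 * m")
    case True
    have "m powr (\<nu> / 2 - 1) * m = m powr (\<nu> / 2)"
      using assms by (simp add: powr_diff)
    moreover have "m powr (\<nu> / 2) \<le> \<nu> powr (\<nu> / 2)"
      using assms by (intro powr_mono2) auto
    ultimately show ?thesis
      using True by (simp add: M_def)
  next
    case False
    have "(\<nu> / 2 - 1 + 1) * ((m / \<nu>) powr (\<nu> / 2 - 1) * (1 - m / \<nu>)) \<le> 1"
      using assms by (intro powr_mult_one_minus_le) auto
    then have "m powr (\<nu> / 2 - 1) * (\<nu> * a) \<le> 2 * (\<nu> powr (\<nu> / 2 - 1) * \<nu>)"
      using assms by (simp add: a_def powr_divide field_simps)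
    also have "\<nu> powr (\<nu> / 2 - 1) * \<nu> = \<nu> powr (\<nu> / 2)"
      using assms by (simp add: powr_diff)
    finally show ?thesis
      using False by (simp add: M_def)
  qed
  have "(\<nu> - m) * m powr (\<nu> / 2 - 1) * x * (\<nu> * s + m)
      = m powr (\<nu> / 2 - 1) * (x * (a * (\<nu> * s + m)))"
    by (simp add: a_def mult_ac)
  also have "\<dots> \<le> m powr (\<nu> / 2 - 1) * (x * (M * (s + a / 2)))"
    by (intro mult_left_mono[OF mult_left_mono[OF linear assms(4)]]) simp
  also have "\<dots> = (m powr (\<nu> / 2 - 1) * M) * (x * (s + a / 2))"
    by (simp add: mult_ac)
  also have "\<dots> \<le> (2 * \<nu> powr (\<nu> / 2)) * (s * sqrt s)"
    by (rule mult_mono[OF weight shift]) (use a assms in auto)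
  finally show ?thesis .
qed

lemma tail_profile_slope_le_density:
  fixes \<nu> m x :: real
  assumes "2 < \<nu>" "0 < m" "m < \<nu>" "0 \<le> x"
  shows "student_t_kappa \<nu> m * tail_profile_slope \<nu> m x \<le> student_t_density \<nu> x"
proof -
  define u where "u = x\<^sup>2 + \<nu>"
  define s where "s = x\<^sup>2 + \<nu> - m"
  define U where "U = u powr ((\<nu> + 1) / 2)"
  define C where "C = student_t_const \<nu>"
  have "0 \<le> x\<^sup>2"
    by simp
  then have u: "0 < u" and s: "0 < s"
    using assms unfolding u_def s_def by linarith+
  have U: "0 < U"
    using u by (simp add: U_def)
  have C: "0 < C"
    using assms by (simp add: C_def student_t_const_def Gamma_real_pos)
  have s32: "0 < s * sqrt s"
    using s by simp
  have "\<nu> * u - (\<nu> - 1) * m = \<nu> * s + m"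
    by (simp add: u_def s_def algebra_simps)
  then have "student_t_kappa \<nu> m * tail_profile_slope \<nu> m x
      = C * sqrt \<nu> / (2 * U) * ((\<nu> - m) * m powr (\<nu> / 2 - 1) * x * (\<nu> * s + m) / (s * sqrt s))"
    using assms U s32
    by (simp add: tail_profile_slope_def u_def s_def U_def student_t_kappa_eq C_def field_simps)
  also have "\<dots> \<le> C * sqrt \<nu> / (2 * U) * (2 * \<nu> powr (\<nu> / 2))"
    using tail_slope_ineq[OF assms] s32 C U assms
    by (intro mult_left_mono) (auto simp: s_def pos_divide_le_eq)
  also have "\<dots> = C * (\<nu> powr (\<nu> / 2) * sqrt \<nu>) / U"
    using U by (simp add: field_simps)
  also have "\<dots> = student_t_density \<nu> x"
  proof -
    have "1 + x\<^sup>2 / \<nu> = u / \<nu>"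
      using assms by (simp add: u_def field_simps)
    then have "(1 + x\<^sup>2 / \<nu>) powr (- (\<nu> + 1) / 2) = \<nu> powr ((\<nu> + 1) / 2) / U"
      using u assms by (simp add: U_def powr_divide powr_minus_divide divide_simps flip: powr_add)
    moreover have "\<nu> powr ((\<nu> + 1) / 2) = \<nu> powr (\<nu> / 2) * sqrt \<nu>"
      using assms by (simp add: add_divide_distrib powr_add powr_half_sqrt)
    ultimately show ?thesis
      by (simp add: student_t_density_eq student_t_kernel_def C_def)
  qed
  finally show ?thesis
    unfolding u_def s_def U_def .
qed

lemma student_t_tail_ge:
  fixes \<nu> m t :: real
  assumes "2 < \<nu>" "0 < m" "m < \<nu>" "0 \<le> t"
  shows "student_t_kappa \<nu> m * tail_profile \<nu> m t \<le> 1 - student_t_CDF \<nu> t"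
  unfolding one_minus_student_t_CDF[OF assms(1)]
proof (rule antiderivative_le_set_integral_greaterThan)
  let ?\<kappa> = "student_t_kappa \<nu> m"
  have deriv: "((\<lambda>x. ?\<kappa> * tail_profile \<nu> m x) has_real_derivative
      - (?\<kappa> * tail_profile_slope \<nu> m x)) (at x)" for x
    using DERIV_cmult[OF tail_profile_has_real_derivative[of \<nu> m x], of ?\<kappa>] assms by simp
  then show "((\<lambda>x. ?\<kappa> * tail_profile \<nu> m x) has_real_derivative
      - (?\<kappa> * tail_profile_slope \<nu> m x)) (at x)" for x .
  show "isCont (\<lambda>x. ?\<kappa> * tail_profile \<nu> m x) t"
    using deriv by (rule DERIV_isCont)
  show "isCont (\<lambda>x. ?\<kappa> * tail_profile_slope \<nu> m x) x" for x
    using assms by (intro continuous_intros isCont_tail_profile_slope) auto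
  show "0 \<le> ?\<kappa> * tail_profile_slope \<nu> m x" if "t < x" for x
    using that assms student_t_kappa_pos[of m \<nu>] tail_profile_slope_nonneg[of \<nu> m x] by simp
  show "?\<kappa> * tail_profile_slope \<nu> m x \<le> student_t_density \<nu> x" if "t < x" for x
    using that assms by (intro tail_profile_slope_le_density) auto
  show "((\<lambda>x. ?\<kappa> * tail_profile \<nu> m x) \<longlongrightarrow> 0) at_top"
    using tendsto_mult_right_zero[OF tail_profile_tendsto_0] assms by auto
  show "set_integrable lborel {t<..} (student_t_density \<nu>)"
    by (rule set_integrable_subset[OF student_t_density_integral_UNIV(1)]) (use assms in auto)
qed

theorem lemma1:
  fixes \<nu> m t :: real
  assumes "\<nu> > 2" and "0 < m" and "m < \<nu>" and "t > 0"
  shows "1 / ((1 - student_t_CDF \<nu> t) * (t\<^sup>2 + \<nu>) powr ((\<nu> - 1) / 2))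
           \<le> sqrt (t\<^sup>2 + \<nu> - m) /
             (Gamma ((\<nu> + 1) / 2) * (\<nu> - m) * m powr (\<nu> / 2 - 1)
              / (2 * sqrt pi * Gamma (\<nu> / 2)))"
proof -
  let ?\<kappa> = "student_t_kappa \<nu> m"
  let ?P = "(t\<^sup>2 + \<nu>) powr ((\<nu> - 1) / 2)"
  let ?r = "sqrt (t\<^sup>2 + \<nu> - m)"
  have "0 < t\<^sup>2 + \<nu>" "0 < t\<^sup>2 + \<nu> - m"
    using assms zero_le_power2[of t] by linarith+
  then have pos: "0 < ?\<kappa>" "0 < ?P" "0 < ?r"
    using assms student_t_kappa_pos[of m \<nu>] by auto
  have bound: "?\<kappa> / (?P * ?r) \<le> 1 - student_t_CDF \<nu> t"
    using student_t_tail_ge[of \<nu> m t] assms by (simp add: tail_profile_def)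
  moreover have "0 < ?\<kappa> / (?P * ?r)"
    using pos by simp
  ultimately have "0 < 1 - student_t_CDF \<nu> t"
    by linarith
  with bound have "1 / ((1 - student_t_CDF \<nu> t) * ?P) \<le> 1 / (?\<kappa> / (?P * ?r) * ?P)"
    using pos by (intro divide_left_mono mult_right_mono mult_pos_pos) auto
  also have "\<dots> = ?r / ?\<kappa>"
    using pos by (simp add: field_simps)
  finally show ?thesis
    unfolding student_t_kappa_def .
qed

end
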